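(* Let $q$ be a prime power and $m$ a positive integer with $m\mid q-1$. Let $\mathrm{Fix}(a)$ be the set of cyclic subgroups $H\le D(2,q)$ of order $m$ with $aHa^{-1}=H$; every such $H$ is of the form $\langle\mathrm{dia}(\lambda,\lambda^l)\rangle$ with $\lambda\in\mathbb{F}_q^*$ of order $m$ and $l\in(\mathbb{Z}/m\mathbb{Z})^\times$, $l^2\equiv1\pmod m$, with $l$ uniquely determined by $H$. Then the map $\mathrm{Fix}(a)\to\mathrm{Aut}(\mathbb{Z}_m)\cong(\mathbb{Z}/m\mathbb{Z})^\times$, $\langle\mathrm{dia}(\lambda,\lambda^l)\rangle\mapsto l$, is bijective if and only if $m=2^t3^s$ with $0\le t\le 3$ and $0\le s\le 1$.
   Context: $D(2,q)$ is the group of invertible diagonal $2\times2$ matrices over $\mathbb{F}_q$; $\mathrm{dia}(d_1,d_2)$ denotes the diagonal matrix with diagonal entries $d_1,d_2$; $a=\begin{pmatrix}0&1\\1&0\end{pmatrix}$. *)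

theory Defs
  imports "HOL-Analysis.Analysis" "HOL-Number_Theory.Cong"
begin

text \<open>2x2 matrices over a finite field 'a (so q = CARD('a), a prime power).
  Matrices are elements of 'a^2^2 with product (**), identity mat 1.\<close>

definition dia :: "'a::field \<Rightarrow> 'a \<Rightarrow> 'a^2^2" where
  "dia d1 d2 = (\<chi> i j. if i = j then (if i = 1 then d1 else d2) else 0)"

definition Dgrp :: "(('a::field)^2^2) set" where
  "Dgrp = {dia d1 d2 | d1 d2. d1 \<noteq> 0 \<and> d2 \<noteq> 0}"

definition amat :: "('a::field)^2^2" where
  "amat = (\<chi> i j. if i = j then 0 else 1)"

fun mpow :: "('a::field)^2^2 \<Rightarrow> nat \<Rightarrow> 'a^2^2" where
  "mpow M 0 = mat 1"
| "mpow M (Suc n) = M ** mpow M n"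

definition cyc :: "('a::field)^2^2 \<Rightarrow> ('a^2^2) set" where
  "cyc g = {mpow g n | n. True}"

definition ford :: "'a::field \<Rightarrow> nat" where
  "ford x = (LEAST n. n > 0 \<and> x ^ n = 1)"

definition FixA :: "nat \<Rightarrow> (('a::{field,finite})^2^2) set set" where
  "FixA m = {H. (\<exists>g \<in> Dgrp. H = cyc g) \<and> card H = m \<and>
                 (\<lambda>M. amat ** M ** matrix_inv amat) ` H = H}"

definition unitsmod :: "nat \<Rightarrow> nat set" where
  "unitsmod m = {l. l < m \<and> coprime l m}"

definition fixmap :: "nat \<Rightarrow> (('a::{field,finite})^2^2) set \<Rightarrow> nat" where
  "fixmap m H = (THE l. l \<in> unitsmod m \<and> [l ^ 2 = 1] (mod m) \<and>
        (\<exists>lam::'a. lam \<noteq> 0 \<and> ford lam = m \<and> H = cyc (dia lam (lam ^ l))))"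

end

theory Submission
  imports Defs "HOL-Algebra.Multiplicative_Group" "HOL-Computational_Algebra.Polynomial"
    "HOL-Computational_Algebra.Primes"
begin

text \<open>Conjugation by \<open>a\<close> swaps the two diagonal entries, so a cyclic subgroup
  \<open>\<langle>dia(d\<^sub>1, d\<^sub>2)\<rangle>\<close> of order \<open>m\<close> is \<open>a\<close>-stable iff \<open>dia(d\<^sub>2, d\<^sub>1)\<close> lies in it, i.e.
  \<open>d\<^sub>2 = d\<^sub>1\<^sup>k\<close> and \<open>d\<^sub>1 = d\<^sub>2\<^sup>k\<close>; this forces \<open>d\<^sub>1\<close> to have order \<open>m\<close> and \<open>k\<^sup>2 \<equiv> 1 (mod m)\<close>.
  Since \<open>F\<^sub>q\<^sup>*\<close> is cyclic, its elements of order \<open>m\<close> are powers of one another, so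
  \<open>\<langle>dia(\<lambda>, \<lambda>\<^sup>l)\<rangle>\<close> depends only on \<open>l mod m\<close>, and \<open>l\<close> can be read off the group.
  Thus the map is injective with image the square roots of \<open>1\<close> in \<open>(\<int>/m\<int>)\<^sup>\<times>\<close>, and it is
  onto iff every unit modulo \<open>m\<close> squares to \<open>1\<close>. That holds for the divisors of \<open>24\<close>;
  for any other \<open>m\<close>, the unit \<open>5\<close> (if \<open>5 \<nmid> m\<close>, as \<open>5\<^sup>2 - 1 = 24\<close>) or a suitable unit
  \<open>1 + (m/5) j\<close> (if \<open>5 \<mid> m\<close>) has square different from \<open>1\<close>.\<close>

section \<open>Diagonal matrices and the swap matrix\<close>

lemma dia_mult_dia: "dia a b ** dia c d = dia (a * c) (b * d)"
  by (simp add: dia_def matrix_matrix_mult_def vec_eq_iff sum_2 forall_2)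

lemma mat_1_eq_dia: "mat 1 = (dia 1 1 :: 'a::field^2^2)"
  by (simp add: dia_def mat_def vec_eq_iff forall_2)

lemma mpow_dia: "mpow (dia a b) n = dia (a ^ n) (b ^ n)"
  by (induction n) (simp_all add: mat_1_eq_dia dia_mult_dia)

lemma dia_eq_dia_iff: "dia a b = dia c d \<longleftrightarrow> a = c \<and> b = d"
  by (auto simp: dia_def vec_eq_iff forall_2)

lemma amat_mult_amat: "amat ** amat = (mat 1 :: 'a::field^2^2)"
  by (simp add: amat_def mat_def matrix_matrix_mult_def vec_eq_iff sum_2 forall_2)

lemma matrix_inv_amat: "matrix_inv (amat :: 'a::field^2^2) = amat"
proof -
  have "amat ** amat = mat 1 \<and> amat ** amat = (mat 1 :: 'a^2^2)"
    by (simp add: amat_mult_amat)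
  then have "amat ** matrix_inv amat = (mat 1 :: 'a^2^2)"
    unfolding matrix_inv_def by (rule someI2) simp
  then show ?thesis
    by (metis amat_mult_amat matrix_mul_assoc matrix_mul_lid matrix_mul_rid)
qed

lemma amat_conj_dia: "amat ** dia a b ** amat = dia b a"
  by (simp add: amat_def dia_def matrix_matrix_mult_def vec_eq_iff sum_2 forall_2)

lemma amat_conj_amat_conj: "amat ** (amat ** M ** amat) ** amat = (M :: 'a::field^2^2)"
  by (metis matrix_mul_assoc amat_mult_amat matrix_mul_lid matrix_mul_rid)

section \<open>Multiplicative order in a finite field\<close>

lemma exists_power_eq_1:
  fixes x :: "'a::{field,finite}"
  assumes "x \<noteq> 0"
  shows "\<exists>n>0. x ^ n = 1"
proof -
  obtain i j :: nat where "i < j" "x ^ i = x ^ j"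
  proof -
    have "\<not> inj (\<lambda>n::nat. x ^ n)"
      using finite_imageD[of "\<lambda>n::nat. x ^ n" UNIV] by auto
    then obtain i j :: nat where "i \<noteq> j" "x ^ i = x ^ j"
      by (auto simp: inj_def)
    then show ?thesis
      using that by (metis linorder_neq_iff)
  qed
  moreover have "x ^ i * x ^ (j - i) = x ^ j"
    using \<open>i < j\<close> by (simp flip: power_add)
  ultimately have "x ^ (j - i) = 1"
    using assms by simp
  then show ?thesis
    using \<open>i < j\<close> by (intro exI[of _ "j - i"]) simp
qed

lemma
  fixes x :: "'a::{field,finite}"
  assumes "x \<noteq> 0"
  shows ford_gt_0: "0 < ford x" and power_ford_eq_1: "x ^ ford x = 1"
  using LeastI_ex[OF exists_power_eq_1[OF assms]] unfolding ford_def by blast+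

lemma power_eq_1_iff_ford_dvd:
  fixes x :: "'a::{field,finite}"
  assumes "x \<noteq> 0"
  shows "x ^ n = 1 \<longleftrightarrow> ford x dvd n"
proof
  assume "ford x dvd n"
  then show "x ^ n = 1"
    using power_ford_eq_1[OF assms] by (auto simp: power_mult)
next
  assume "x ^ n = 1"
  have "x ^ n = (x ^ ford x) ^ (n div ford x) * x ^ (n mod ford x)"
    by (simp flip: power_mult power_add)
  then have "x ^ (n mod ford x) = 1"
    using \<open>x ^ n = 1\<close> power_ford_eq_1[OF assms] by simp
  moreover have "n mod ford x < ford x"
    using ford_gt_0[OF assms] by simp
  then have "\<not> (0 < n mod ford x \<and> x ^ (n mod ford x) = 1)"
    unfolding ford_def by (rule not_less_Least)
  ultimately show "ford x dvd n"
    by auto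
qed

lemma power_eq_power_iff_cong_ford:
  fixes x :: "'a::{field,finite}"
  assumes "x \<noteq> 0"
  shows "x ^ i = x ^ j \<longleftrightarrow> [i = j] (mod ford x)"
proof -
  have *: "x ^ i = x ^ j \<longleftrightarrow> [i = j] (mod ford x)" if "i \<le> j" for i j
  proof -
    have "x ^ j = x ^ i * x ^ (j - i)"
      using that by (simp flip: power_add)
    then have "x ^ i = x ^ j \<longleftrightarrow> x ^ (j - i) = 1"
      using assms by simp
    also have "\<dots> \<longleftrightarrow> ford x dvd j - i"
      using assms by (rule power_eq_1_iff_ford_dvd)
    also have "\<dots> \<longleftrightarrow> [i = j] (mod ford x)"
      using that by (subst cong_sym_eq) (simp add: cong_altdef_nat)
    finally show ?thesis .
  qed
  show ?thesis
    using *[of i j] *[of j i] by (cases "i \<le> j") (auto simp: cong_sym_eq)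
qed

lemma power_mod_ford:
  fixes x :: "'a::{field,finite}"
  assumes "x \<noteq> 0"
  shows "x ^ (n mod ford x) = x ^ n"
  using assms by (simp add: power_eq_power_iff_cong_ford cong_def)

lemma inj_on_power_lessThan_ford:
  fixes x :: "'a::{field,finite}"
  assumes "x \<noteq> 0"
  shows "inj_on (\<lambda>i. x ^ i) {..<ford x}"
  by (rule inj_onI) (use assms cong_less_modulus_unique_nat in \<open>auto simp: power_eq_power_iff_cong_ford\<close>)

lemma ford_power:
  fixes x :: "'a::{field,finite}"
  assumes "x \<noteq> 0" and "ford x = k * m"
  shows "ford (x ^ k) = m"
proof -
  have "0 < k"
    using ford_gt_0[OF assms(1)] assms(2) by (cases k) auto
  have "ford (x ^ k) dvd n \<longleftrightarrow> m dvd n" for n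
  proof -
    have "ford (x ^ k) dvd n \<longleftrightarrow> x ^ (k * n) = 1"
      using assms(1) by (simp add: power_eq_1_iff_ford_dvd[symmetric] power_mult)
    also have "\<dots> \<longleftrightarrow> k * m dvd k * n"
      using assms by (simp add: power_eq_1_iff_ford_dvd)
    finally show ?thesis
      using \<open>0 < k\<close> by simp
  qed
  then show ?thesis
    by (meson dvd_antisym dvd_refl)
qed

lemma card_roots_of_unity_le:
  assumes "0 < m"
  shows "card {x::'a::idom. x ^ m = 1} \<le> m"
proof -
  let ?p = "[:-1:] + Polynomial.monom (1::'a) m"
  have "Polynomial.degree ?p = m"
    using assms by (subst degree_add_eq_right) (auto simp: degree_monom_eq)
  moreover have "?p \<noteq> 0"
    using assms \<open>Polynomial.degree ?p = m\<close> by auto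
  ultimately have "card {x. poly ?p x = 0} \<le> m"
    using card_poly_roots_bound by metis
  then show ?thesis
    by (simp add: poly_monom)
qed

text \<open>There are at most \<open>m\<close> roots of unity of order dividing \<open>m\<close>, and an element of order \<open>m\<close>
  already has \<open>m\<close> distinct powers.\<close>
lemma root_of_unity_is_power:
  fixes lam mu :: "'a::{field,finite}"
  assumes "lam \<noteq> 0" and "mu ^ ford lam = 1"
  shows "\<exists>i. mu = lam ^ i"
proof -
  let ?m = "ford lam"
  have "(lam ^ i) ^ ?m = (lam ^ ?m) ^ i" for i
    by (simp add: mult.commute flip: power_mult)
  then have "(\<lambda>i. lam ^ i) ` {..<?m} \<subseteq> {x. x ^ ?m = 1}"
    using power_ford_eq_1[OF assms(1)] by auto
  moreover have "card ((\<lambda>i. lam ^ i) ` {..<?m}) = ?m"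
    using inj_on_power_lessThan_ford[OF assms(1)] by (simp add: card_image)
  ultimately have "(\<lambda>i. lam ^ i) ` {..<?m} = {x. x ^ ?m = 1}"
    using card_roots_of_unity_le[OF ford_gt_0[OF assms(1)], where 'a='a]
    by (intro card_seteq) auto
  then show ?thesis
    using assms(2) by blast
qed

lemma ford_generator:
  fixes g :: "'a::{field,finite}"
  assumes "g \<noteq> 0" and "\<And>x. x \<noteq> 0 \<Longrightarrow> \<exists>i. x = g ^ i"
  shows "ford g = CARD('a) - 1"
proof -
  have "UNIV - {0} = (\<lambda>i. g ^ i) ` {..<ford g}"
  proof
    show "UNIV - {0} \<subseteq> (\<lambda>i. g ^ i) ` {..<ford g}"
    proof
      fix x :: 'a
      assume "x \<in> UNIV - {0}"
      then obtain i where "x = g ^ (i mod ford g)"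
        using assms(2) power_mod_ford[OF assms(1)] by force
      then show "x \<in> (\<lambda>i. g ^ i) ` {..<ford g}"
        using ford_gt_0[OF assms(1)] by auto
    qed
  qed (use assms(1) in auto)
  moreover have "card ((\<lambda>i. g ^ i) ` {..<ford g}) = ford g"
    using inj_on_power_lessThan_ford[OF assms(1)] by (simp add: card_image)
  ultimately show ?thesis
    by (metis card_Diff_singleton finite UNIV_I)
qed

definition type_ring :: "'a::field ring" where
  "type_ring = \<lparr>carrier = UNIV, monoid.mult = (*), one = 1, zero = 0, add = (+)\<rparr>"

lemma field_type_ring: "field (type_ring :: 'a::field ring)"
  unfolding type_ring_def
  by unfold_locales (auto simp: Units_def algebra_simps intro: exI[of _ "- _"], metis right_inverse)

lemma exists_ford_eq:
  assumes "m dvd CARD('a::{field,finite}) - 1"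
  shows "\<exists>lam::'a. lam \<noteq> 0 \<and> ford lam = m"
proof -
  let ?F = "type_ring :: 'a ring"
  interpret F: field ?F
    by (rule field_type_ring)
  obtain g where "g \<in> carrier (mult_of ?F)"
    and gen: "carrier (mult_of ?F) = {g [^]\<^bsub>?F\<^esub> i | i::nat. i \<in> UNIV}"
    using F.finite_field_mult_group_has_gen by (auto simp: type_ring_def)
  have "g [^]\<^bsub>?F\<^esub> (i::nat) = g ^ i" for i
    by (induction i) (simp_all add: type_ring_def power_Suc2)
  moreover have carrier: "carrier (mult_of ?F) = UNIV - {0}"
    by (simp add: type_ring_def)
  ultimately have "UNIV - {0} = {g ^ i | i. True}"
    using gen by simp
  moreover have "g \<noteq> 0"
    using \<open>g \<in> _\<close> unfolding carrier by simp
  ultimately have "ford g = CARD('a) - 1"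
    by (intro ford_generator) blast+
  then obtain k where "ford g = k * m"
    using assms by (metis dvdE mult.commute)
  then have "ford (g ^ k) = m"
    by (rule ford_power[OF \<open>g \<noteq> 0\<close>])
  then show ?thesis
    using \<open>g \<noteq> 0\<close> by (intro exI[of _ "g ^ k"]) simp
qed

section \<open>Cyclic groups of diagonal matrices\<close>

lemma cyc_dia_power: "cyc (dia x (x ^ k)) = {dia (x ^ n) (x ^ (k * n)) | n. True}"
  by (simp add: cyc_def mpow_dia power_mult)

lemma dia_mem_cyc_dia_power: "dia x (x ^ k) \<in> cyc (dia x (x ^ k))"
  unfolding cyc_dia_power by (auto intro: exI[of _ 1])

lemma card_cyc_dia_power:
  fixes x :: "'a::{field,finite}"
  assumes "x \<noteq> 0"
  shows "card (cyc (dia x (x ^ k))) = ford x"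
proof -
  let ?f = "\<lambda>n. dia (x ^ n) (x ^ (k * n))"
  have "cyc (dia x (x ^ k)) = ?f ` {..<ford x}"
  proof
    show "cyc (dia x (x ^ k)) \<subseteq> ?f ` {..<ford x}"
    proof
      fix M assume "M \<in> cyc (dia x (x ^ k))"
      then obtain n where "M = ?f n"
        by (auto simp: cyc_dia_power)
      also have "\<dots> = ?f (n mod ford x)"
        using assms by (simp add: dia_eq_dia_iff power_eq_power_iff_cong_ford cong_def mod_mult_right_eq)
      finally show "M \<in> ?f ` {..<ford x}"
        using ford_gt_0[OF assms] by auto
    qed
  qed (auto simp: cyc_dia_power)
  moreover have "inj_on ?f {..<ford x}"
    using inj_on_power_lessThan_ford[OF assms] by (auto simp: inj_on_def dia_eq_dia_iff)
  ultimately show ?thesis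
    by (simp add: card_image)
qed

lemma cyc_dia_power_eq_iff:
  fixes x :: "'a::{field,finite}"
  assumes "x \<noteq> 0"
  shows "cyc (dia x (x ^ k)) = cyc (dia x (x ^ l)) \<longleftrightarrow> [k = l] (mod ford x)"
proof
  assume "cyc (dia x (x ^ k)) = cyc (dia x (x ^ l))"
  then have "dia x (x ^ l) \<in> cyc (dia x (x ^ k))"
    using dia_mem_cyc_dia_power by metis
  then obtain n where "x = x ^ n" and "x ^ l = x ^ (k * n)"
    by (auto simp: cyc_dia_power dia_eq_dia_iff)
  then have "x ^ l = x ^ k"
    by (metis power_mult mult.commute)
  then show "[k = l] (mod ford x)"
    using assms by (simp add: power_eq_power_iff_cong_ford cong_sym_eq)
next
  assume "[k = l] (mod ford x)"
  then show "cyc (dia x (x ^ k)) = cyc (dia x (x ^ l))"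
    using assms by (simp add: power_eq_power_iff_cong_ford[symmetric])
qed

lemma cyc_dia_power_eq_if_ford_eq:
  fixes lam mu :: "'a::{field,finite}"
  assumes "lam \<noteq> 0" and "mu \<noteq> 0" and "ford lam = ford mu"
  shows "cyc (dia lam (lam ^ l)) = cyc (dia mu (mu ^ l))"
proof -
  have sub: "cyc (dia (y ^ i) ((y ^ i) ^ l)) \<subseteq> cyc (dia y (y ^ l))" for y :: 'a and i
  proof
    fix M assume "M \<in> cyc (dia (y ^ i) ((y ^ i) ^ l))"
    then obtain n where "M = dia ((y ^ i) ^ n) ((y ^ i) ^ (l * n))"
      unfolding cyc_dia_power by blast
    then have "M = dia (y ^ (i * n)) (y ^ (l * (i * n)))"
      by (simp add: mult_ac flip: power_mult)
    then show "M \<in> cyc (dia y (y ^ l))"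
      unfolding cyc_dia_power by blast
  qed
  obtain i where "mu = lam ^ i"
    using root_of_unity_is_power[OF assms(1)] power_ford_eq_1[OF assms(2)] assms(3) by auto
  moreover obtain j where "lam = mu ^ j"
    using root_of_unity_is_power[OF assms(2)] power_ford_eq_1[OF assms(1)] assms(3) by auto
  ultimately show ?thesis
    using sub[of lam i] sub[of mu j] by auto
qed

lemma amat_conj_cyc_dia_power:
  fixes lam :: "'a::{field,finite}"
  assumes "lam \<noteq> 0" and "[l ^ 2 = 1] (mod ford lam)"
  shows "(\<lambda>M. amat ** M ** amat) ` cyc (dia lam (lam ^ l)) = cyc (dia lam (lam ^ l))"
    (is "?c ` ?H = ?H")
proof
  have "lam ^ (l * (l * n)) = lam ^ n" for n
    using cong_scalar_right[OF assms(2), of n] assms(1)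
    by (simp add: power_eq_power_iff_cong_ford power2_eq_square mult.assoc)
  then have "?c (dia (lam ^ n) (lam ^ (l * n))) = dia (lam ^ (l * n)) (lam ^ (l * (l * n)))" for n
    by (simp add: amat_conj_dia)
  then show sub: "?c ` ?H \<subseteq> ?H"
    unfolding cyc_dia_power by blast
  show "?H \<subseteq> ?c ` ?H"
  proof
    fix M assume "M \<in> ?H"
    then have "?c M \<in> ?H" and "M = ?c (?c M)"
      using sub by (auto simp: amat_conj_amat_conj)
    then show "M \<in> ?c ` ?H"
      by blast
  qed
qed

section \<open>The map from Fix(a) to the units modulo m\<close>

definition fix_param :: "nat \<Rightarrow> (('a::{field,finite})^2^2) set \<Rightarrow> nat \<Rightarrow> bool" where
  "fix_param m H l \<longleftrightarrow> l \<in> unitsmod m \<and> [l ^ 2 = 1] (mod m) \<and>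
     (\<exists>lam::'a. lam \<noteq> 0 \<and> ford lam = m \<and> H = cyc (dia lam (lam ^ l)))"

lemma FixA_imp_ex_fix_param:
  assumes "H \<in> FixA m"
  shows "\<exists>l. fix_param m H l"
proof -
  obtain d1 d2 :: 'a where "d1 \<noteq> 0" and H: "H = cyc (dia d1 d2)" and "card H = m"
    and conj: "(\<lambda>M. amat ** M ** amat) ` H = H"
    using assms by (auto simp: FixA_def Dgrp_def matrix_inv_amat)
  have "dia d1 d2 \<in> H"
    unfolding H cyc_def by (simp add: mpow_dia) (metis power_one_right)
  then have "dia d2 d1 \<in> H"
    using conj amat_conj_dia by (metis image_eqI)
  then obtain k where "d2 = d1 ^ k" and "d1 = d2 ^ k"
    unfolding H cyc_def by (auto simp: mpow_dia dia_eq_dia_iff)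
  then have Hk: "H = cyc (dia d1 (d1 ^ k))" and "d1 ^ (k * k) = d1 ^ 1"
    using H by (simp, metis power_mult power_one_right)
  have m: "ford d1 = m"
    using card_cyc_dia_power[OF \<open>d1 \<noteq> 0\<close>] Hk \<open>card H = m\<close> by simp
  then have "[k ^ 2 = 1] (mod m)"
    using \<open>d1 ^ (k * k) = d1 ^ 1\<close> power_eq_power_iff_cong_ford[OF \<open>d1 \<noteq> 0\<close>, of "k * k" 1]
    by (simp only: power2_eq_square)
  define l where "l = k mod m"
  have "0 < m"
    using ford_gt_0[OF \<open>d1 \<noteq> 0\<close>] m by simp
  have "[l ^ 2 = 1] (mod m)"
    using \<open>[k ^ 2 = 1] (mod m)\<close> by (simp add: l_def cong_def power_mod)
  moreover have "l \<in> unitsmod m"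
    using \<open>0 < m\<close> cong_imp_coprime[OF cong_sym[OF \<open>[l ^ 2 = 1] (mod m)\<close>]]
    by (simp add: unitsmod_def l_def)
  moreover have "H = cyc (dia d1 (d1 ^ l))"
    using Hk cyc_dia_power_eq_iff[OF \<open>d1 \<noteq> 0\<close>] m by (simp add: l_def cong_def)
  ultimately show ?thesis
    unfolding fix_param_def using \<open>d1 \<noteq> 0\<close> m by blast
qed

lemma fix_param_unique:
  assumes "fix_param m H k" and "fix_param m H l"
  shows "k = l"
proof -
  obtain lam :: 'a where "lam \<noteq> 0" "ford lam = m" "H = cyc (dia lam (lam ^ k))" "k < m"
    using assms(1) by (auto simp: fix_param_def unitsmod_def)
  moreover obtain mu :: 'a where "mu \<noteq> 0" "ford mu = m" "H = cyc (dia mu (mu ^ l))" "l < m"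
    using assms(2) by (auto simp: fix_param_def unitsmod_def)
  ultimately have "cyc (dia lam (lam ^ k)) = cyc (dia lam (lam ^ l))"
    using cyc_dia_power_eq_if_ford_eq by metis
  then have "[k = l] (mod m)"
    using cyc_dia_power_eq_iff \<open>lam \<noteq> 0\<close> \<open>ford lam = m\<close> by blast
  then show ?thesis
    using \<open>k < m\<close> \<open>l < m\<close> cong_less_modulus_unique_nat by blast
qed

lemma cyc_dia_power_mem_FixA:
  fixes lam :: "'a::{field,finite}"
  assumes "lam \<noteq> 0" and "[l ^ 2 = 1] (mod ford lam)"
  shows "cyc (dia lam (lam ^ l)) \<in> FixA (ford lam)"
proof -
  have "dia lam (lam ^ l) \<in> Dgrp"
    unfolding Dgrp_def using assms(1) by (intro CollectI exI[of _ lam] exI[of _ "lam ^ l"]) simp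
  then show ?thesis
    using card_cyc_dia_power[OF assms(1)] amat_conj_cyc_dia_power[OF assms]
    by (auto simp: FixA_def matrix_inv_amat)
qed

lemma fixmap_eq:
  assumes "fix_param m H l"
  shows "fixmap m H = l"
proof -
  have "fixmap m H = (THE l. fix_param m H l)"
    by (simp add: fixmap_def fix_param_def)
  also have "\<dots> = l"
    using assms fix_param_unique by (intro the_equality) blast+
  finally show ?thesis .
qed

lemma fix_param_fixmap:
  assumes "H \<in> FixA m"
  shows "fix_param m H (fixmap m H)"
  using FixA_imp_ex_fix_param[OF assms] fixmap_eq by metis

lemma inj_on_fixmap: "inj_on (fixmap m) (FixA m)"
proof
  fix H1 H2 :: "(('a::{field,finite})^2^2) set"
  assume "H1 \<in> FixA m" "H2 \<in> FixA m" and "fixmap m H1 = fixmap m H2"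
  then obtain lam mu :: 'a and l where
      "lam \<noteq> 0" "ford lam = m" "H1 = cyc (dia lam (lam ^ l))"
      "mu \<noteq> 0" "ford mu = m" "H2 = cyc (dia mu (mu ^ l))"
    using fix_param_fixmap unfolding fix_param_def by metis
  then show "H1 = H2"
    using cyc_dia_power_eq_if_ford_eq by metis
qed

lemma fixmap_image:
  assumes "m dvd CARD('a::{field,finite}) - 1"
  shows "fixmap m ` (FixA m :: ('a^2^2) set set) = {l \<in> unitsmod m. [l ^ 2 = 1] (mod m)}"
proof
  show "fixmap m ` (FixA m :: ('a^2^2) set set) \<subseteq> {l \<in> unitsmod m. [l ^ 2 = 1] (mod m)}"
    using fix_param_fixmap unfolding fix_param_def by blast
next
  show "{l \<in> unitsmod m. [l ^ 2 = 1] (mod m)} \<subseteq> fixmap m ` (FixA m :: ('a^2^2) set set)"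
  proof
    fix l assume l: "l \<in> {l \<in> unitsmod m. [l ^ 2 = 1] (mod m)}"
    obtain lam :: 'a where "lam \<noteq> 0" "ford lam = m"
      using exists_ford_eq[OF assms] by blast
    then have "cyc (dia lam (lam ^ l)) \<in> FixA m" and "fix_param m (cyc (dia lam (lam ^ l))) l"
      using l cyc_dia_power_mem_FixA[of lam l] by (auto simp: fix_param_def)
    then show "l \<in> fixmap m ` (FixA m :: ('a^2^2) set set)"
      using fixmap_eq by (metis image_eqI)
  qed
qed

section \<open>Moduli all of whose units square to one\<close>

lemma square_cong_1_mod_8: "odd (l::nat) \<Longrightarrow> [l ^ 2 = 1] (mod 8)"
proof -
  assume "odd l"
  then have "l mod 8 = 1 \<or> l mod 8 = 3 \<or> l mod 8 = 5 \<or> l mod 8 = 7"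
    by presburger
  then show ?thesis
    unfolding cong_def by (subst power_mod[symmetric]) auto
qed

lemma square_cong_1_mod_3: "\<not> 3 dvd (l::nat) \<Longrightarrow> [l ^ 2 = 1] (mod 3)"
proof -
  assume "\<not> 3 dvd l"
  then have "l mod 3 = 1 \<or> l mod 3 = 2"
    by presburger
  then show ?thesis
    unfolding cong_def by (subst power_mod[symmetric]) auto
qed

lemma square_cong_1_mod_2_power_3_power:
  fixes l :: nat
  assumes "t \<le> 3" and "s \<le> 1" and "coprime l (2 ^ t * 3 ^ s)"
  shows "[l ^ 2 = 1] (mod 2 ^ t * 3 ^ s)"
proof (rule coprime_cong_mult_nat)
  show "[l ^ 2 = 1] (mod 2 ^ t)"
  proof (cases "t = 0")
    case False
    then have "odd l"
      using assms(3) by (auto simp: coprime_commute)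
    moreover have "2 ^ t dvd (8::nat)"
      using le_imp_power_dvd[OF assms(1), of "2::nat"] by simp
    ultimately show ?thesis
      using square_cong_1_mod_8 cong_dvd_modulus_nat by blast
  qed simp
  show "[l ^ 2 = 1] (mod 3 ^ s)"
  proof (cases "s = 0")
    case False
    then have "s = 1"
      using assms(2) by simp
    then have "coprime l 3"
      using assms(3) by simp
    then have "\<not> 3 dvd l"
      using coprime_common_divisor_nat[of l 3 3] by auto
    then show ?thesis
      using square_cong_1_mod_3 \<open>s = 1\<close> by simp
  qed simp
qed simp

lemma dvd_24_imp_2_power_3_power:
  assumes "(m::nat) dvd 24"
  shows "\<exists>t s. t \<le> 3 \<and> s \<le> 1 \<and> m = 2 ^ t * 3 ^ s"
proof -
  obtain a b where "m = a * b" "a dvd 2 ^ 3" "b dvd 3 ^ 1"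
    using division_decomp[of m "2 ^ 3" "3 ^ 1"] assms by auto
  then show ?thesis
    using divides_primepow_nat[of 2 a 3] divides_primepow_nat[of 3 b 1] by auto
qed

text \<open>\<open>(1 + wj)\<^sup>2 - 1 = w \<cdot> j(2 + wj)\<close>, which \<open>5w\<close> divides only if \<open>5\<close> divides \<open>j(2 + wj)\<close>.\<close>
lemma coprime_not_square_cong_1_mod_5_mult:
  fixes w j :: nat
  assumes "0 < w" and "\<not> 5 dvd 1 + w * j" and "\<not> 5 dvd j * (2 + w * j)"
  shows "coprime (1 + w * j) (5 * w) \<and> \<not> [(1 + w * j) ^ 2 = 1] (mod 5 * w)"
proof
  have "[1 = 1 + w * j] (mod w)"
    unfolding cong_def by (simp only: mod_mult_self2)
  then have "coprime (1 + w * j) w"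
    by (rule cong_imp_coprime) simp
  moreover have "coprime (1 + w * j) 5"
    using assms(2) prime_imp_coprime[of 5 "1 + w * j"] by (simp add: coprime_commute)
  ultimately show "coprime (1 + w * j) (5 * w)"
    by simp
  show "\<not> [(1 + w * j) ^ 2 = 1] (mod 5 * w)"
  proof
    assume "[(1 + w * j) ^ 2 = 1] (mod 5 * w)"
    then have "w * 5 dvd w * (j * (2 + w * j))"
      by (simp add: cong_altdef_nat power2_eq_square algebra_simps)
    then show False
      using assms(1,3) by simp
  qed
qed

lemma exists_coprime_not_square_cong_1:
  fixes m :: nat
  assumes "0 < m" and "\<not> m dvd 24"
  shows "\<exists>l. coprime l m \<and> \<not> [l ^ 2 = 1] (mod m)"
proof (cases "5 dvd m")
  case False
  then have "coprime 5 m"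
    by (simp add: prime_imp_coprime)
  moreover have "\<not> [5 ^ 2 = 1] (mod m)"
    using assms(2) by (simp add: cong_altdef_nat)
  ultimately show ?thesis
    by blast
next
  case True
  then obtain w where "m = 5 * w" and "0 < w"
    using assms(1) by auto
  text \<open>If \<open>5 \<nmid> w\<close>, take \<open>j = w\<^sup>3\<close>: by Fermat \<open>1 + wj \<equiv> 2 (mod 5)\<close>.\<close>
  obtain j where "\<not> 5 dvd 1 + w * j" and "\<not> 5 dvd j * (2 + w * j)"
  proof (cases "5 dvd w")
    case True
    show ?thesis
    proof (rule that[of 1])
      show "\<not> 5 dvd 1 + w * 1" and "\<not> 5 dvd 1 * (2 + w * 1)"
        using True by presburger+
    qed
  next
    case False
    then have "w mod 5 = 1 \<or> w mod 5 = 2 \<or> w mod 5 = 3 \<or> w mod 5 = 4"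
      by presburger
    then have "w ^ 4 mod 5 = 1"
      by (subst power_mod[symmetric]) auto
    moreover have "\<not> 5 dvd w ^ 3"
      using False by (simp add: prime_dvd_power_iff)
    moreover have "w * w ^ 3 = w ^ 4"
      by (simp add: power_numeral_reduce)
    ultimately have "\<not> 5 dvd 1 + w * w ^ 3" and "\<not> 5 dvd 2 + w * w ^ 3"
      by presburger+
    moreover have "\<not> 5 dvd w ^ 3 * (2 + w * w ^ 3)"
      using \<open>\<not> 5 dvd 2 + w * w ^ 3\<close> \<open>\<not> 5 dvd w ^ 3\<close> by (subst prime_dvd_mult_iff) auto
    ultimately show ?thesis
      using that by blast
  qed
  then show ?thesis
    using coprime_not_square_cong_1_mod_5_mult[OF \<open>0 < w\<close>] \<open>m = 5 * w\<close> by blast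
qed

lemma all_units_square_cong_1_iff:
  fixes m :: nat
  assumes "0 < m"
  shows "(\<forall>l \<in> unitsmod m. [l ^ 2 = 1] (mod m)) \<longleftrightarrow> (\<exists>t s. t \<le> 3 \<and> s \<le> 1 \<and> m = 2 ^ t * 3 ^ s)"
proof
  assume all: "\<forall>l \<in> unitsmod m. [l ^ 2 = 1] (mod m)"
  have "m dvd 24"
  proof (rule ccontr)
    assume "\<not> m dvd 24"
    then obtain l where "coprime l m" and "\<not> [l ^ 2 = 1] (mod m)"
      using exists_coprime_not_square_cong_1[OF assms] by blast
    moreover have "l mod m \<in> unitsmod m"
      using assms \<open>coprime l m\<close> by (simp add: unitsmod_def)
    ultimately show False
      using all by (metis cong_def power_mod)
  qed
  then show "\<exists>t s. t \<le> 3 \<and> s \<le> 1 \<and> m = 2 ^ t * 3 ^ s"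
    by (rule dvd_24_imp_2_power_3_power)
next
  assume "\<exists>t s. t \<le> 3 \<and> s \<le> 1 \<and> m = 2 ^ t * 3 ^ s"
  then obtain t s where "t \<le> 3" "s \<le> 1" and m: "m = 2 ^ t * 3 ^ s"
    by blast
  show "\<forall>l \<in> unitsmod m. [l ^ 2 = 1] (mod m)"
    unfolding unitsmod_def m
    using square_cong_1_mod_2_power_3_power[OF \<open>t \<le> 3\<close> \<open>s \<le> 1\<close>] by blast
qed

theorem mainTheorem7:
  fixes m :: nat
  assumes "m > 0" and "m dvd CARD('a::{field,finite}) - 1"
  shows "(\<forall>H \<in> (FixA m :: ('a^2^2) set set).
            \<exists>!l. l \<in> unitsmod m \<and> [l ^ 2 = 1] (mod m) \<and>
               (\<exists>lam::'a. lam \<noteq> 0 \<and> ford lam = m \<and> H = cyc (dia lam (lam ^ l))))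
         \<and> (bij_betw (fixmap m) (FixA m :: ('a^2^2) set set) (unitsmod m)
            \<longleftrightarrow> (\<exists>t s. t \<le> 3 \<and> s \<le> 1 \<and> m = 2 ^ t * 3 ^ s))"
  unfolding fix_param_def[symmetric]
proof
  show "\<forall>H \<in> (FixA m :: ('a^2^2) set set). \<exists>!l. fix_param m H l"
    using FixA_imp_ex_fix_param fix_param_unique by blast
  have "bij_betw (fixmap m) (FixA m :: ('a^2^2) set set) (unitsmod m)
          \<longleftrightarrow> {l \<in> unitsmod m. [l ^ 2 = 1] (mod m)} = unitsmod m"
    using inj_on_fixmap[where 'a='a] fixmap_image[OF assms(2)] by (simp add: bij_betw_def)
  also have "\<dots> \<longleftrightarrow> (\<forall>l \<in> unitsmod m. [l ^ 2 = 1] (mod m))"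
    by blast
  also have "\<dots> \<longleftrightarrow> (\<exists>t s. t \<le> 3 \<and> s \<le> 1 \<and> m = 2 ^ t * 3 ^ s)"
    by (rule all_units_square_cong_1_iff[OF assms(1)])
  finally show "bij_betw (fixmap m) (FixA m :: ('a^2^2) set set) (unitsmod m)
          \<longleftrightarrow> (\<exists>t s. t \<le> 3 \<and> s \<le> 1 \<and> m = 2 ^ t * 3 ^ s)" .
qed

end
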